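(* For $n,i\in\mathbb{N}=\{1,2,\dots\}$ and $\alpha,\beta>-1$, $$\int_{-1}^1|t|^i\,|p_n^{(\alpha,\beta)}(t)|\,dt\le C_{\alpha,\beta}\sqrt{\frac{n}{i^{1+\gamma}}},$$ where $\gamma=\min(\alpha,\beta)$ and $C_{\alpha,\beta}$ is a constant independent of $n$ and $i$.
   Context: The Jacobi polynomials are $P_n^{(\alpha,\beta)}(t)=\sum_{j=0}^n\frac{1}{2^n}\binom{n+\alpha}{n-j}\binom{n+\beta}{j}(t-1)^j(t+1)^{n-j}$. The Jacobi functions on $(-1,1)$ are $p_n^{(\alpha,\beta)}(t)=\frac{(2n+\alpha+\beta+1)\Gamma(n+\alpha+\beta+1)\,n!}{2^{\alpha+\beta+1}\Gamma(n+\alpha+1)\Gamma(n+\beta+1)}(1-t)^{\alpha}(1+t)^{\beta}P_n^{(\alpha,\beta)}(t)$. *)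

theory Defs
  imports "HOL-Analysis.Analysis"
begin

definition jacobiP :: "nat \<Rightarrow> real \<Rightarrow> real \<Rightarrow> real \<Rightarrow> real" where
  "jacobiP n \<alpha> \<beta> t =
     (\<Sum>j\<le>n. (1 / 2 ^ n) * ((real n + \<alpha>) gchoose (n - j)) * ((real n + \<beta>) gchoose j)
              * (t - 1) ^ j * (t + 1) ^ (n - j))"

definition jacobi_fun :: "nat \<Rightarrow> real \<Rightarrow> real \<Rightarrow> real \<Rightarrow> real" where
  "jacobi_fun n \<alpha> \<beta> t =
     ((2 * real n + \<alpha> + \<beta> + 1) * Gamma (real n + \<alpha> + \<beta> + 1) * fact n)
       / (2 powr (\<alpha> + \<beta> + 1) * Gamma (real n + \<alpha> + 1) * Gamma (real n + \<beta> + 1))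
     * (1 - t) powr \<alpha> * (1 + t) powr \<beta> * jacobiP n \<alpha> \<beta> t"

end

theory Submission
  imports Defs
begin

text \<open>
  Write p_n = K_n w P_n with the Jacobi weight w(t) = (1 - t)^\<alpha> (1 + t)^\<beta>. By Cauchy-Schwarz,
  \<integral> |t|^i |p_n| \<le> (\<integral> t^(2i) w)^(1/2) (K_n^2 \<integral> w P_n^2)^(1/2).
  Expanding P_n in the basis ((1 - t)/2)^j ((1 + t)/2)^(n - j) turns \<integral> w P_n^2 into a double sum
  of Beta integrals, which an n-th finite difference collapses to 1/K_n; so the second factor is
  K_n^(1/2) = O(n^(1/2)). For the first, |t|^(2i) \<le> ((1 - t)/2)^(2i) + ((1 + t)/2)^(2i) bounds it by
  B(\<alpha> + 2i + 1, \<beta> + 1) + B(\<alpha> + 1, \<beta> + 2i + 1) = O(i^-(1 + min \<alpha> \<beta>)), by the asymptotics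
  of Gamma ratios.
\<close>

section \<open>An alternating binomial sum of Pochhammer products\<close>

lemma alternating_binomial_sum_Suc:
  fixes f :: "nat \<Rightarrow> 'a::comm_ring_1"
  shows "(\<Sum>j\<le>Suc n. (-1)^j * of_nat (Suc n choose j) * f j) =
         (\<Sum>j\<le>n. (-1)^j * of_nat (n choose j) * (f j - f (Suc j)))"
proof -
  have "(\<Sum>j\<le>Suc n. (-1)^j * of_nat (Suc n choose j) * f j) =
        f 0 + (\<Sum>j\<le>n. (-1)^Suc j * of_nat (n choose Suc j) * f (Suc j))
        + (\<Sum>j\<le>n. (-1)^Suc j * of_nat (n choose j) * f (Suc j))"
    by (simp only: sum.atMost_Suc_shift binomial_Suc_Suc of_nat_add)
       (simp add: algebra_simps sum.distrib[symmetric] sum_subtractf[symmetric])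
  also have "f 0 + (\<Sum>j\<le>n. (-1)^Suc j * of_nat (n choose Suc j) * f (Suc j)) =
             (\<Sum>j\<le>Suc n. (-1)^j * of_nat (n choose j) * f j)"
    by (simp only: sum.atMost_Suc_shift) simp
  also have "\<dots> = (\<Sum>j\<le>n. (-1)^j * of_nat (n choose j) * f j)"
    by (simp add: binomial_eq_0)
  finally show ?thesis
    by (simp only: right_diff_distrib sum_subtractf) (simp add: sum_negf)
qed

lemma pochhammer_plus1_diff:
  fixes x :: "'a::comm_ring_1"
  shows "pochhammer (x + 1) k - pochhammer x k = of_nat k * pochhammer (x + 1) (k - 1)"
proof (cases k)
  case (Suc m)
  have "pochhammer (x + 1) (Suc m) = pochhammer (x + 1) m * (x + 1 + of_nat m)"
    by (rule pochhammer_Suc)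
  moreover have "pochhammer x (Suc m) = x * pochhammer (x + 1) m"
    by (rule pochhammer_rec)
  ultimately show ?thesis
    using Suc by (simp add: algebra_simps)
qed simp

text \<open>
  As a polynomial in j the product has degree n and leading coefficient (-1)^(n - k), and the
  alternating sum is (-1)^n times its n-th forward difference.
\<close>

lemma alternating_binomial_sum_pochhammer_product:
  fixes a b :: "'a::comm_ring_1"
  assumes "k \<le> n"
  shows "(\<Sum>j\<le>n. (-1)^j * of_nat (n choose j) *
            (pochhammer (a + of_nat j) k * pochhammer (b - of_nat j) (n - k)))
         = (-1)^k * of_nat (fact n)"
  using assms
proof (induction n arbitrary: a b k)
  case 0
  then show ?case by simp
next
  case (Suc n)
  define P where "P a b k j = pochhammer (a + of_nat j) k * pochhammer (b - of_nat j) (n - k)"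
    for a b :: 'a and k j
  define g where "g j = pochhammer (a + of_nat j) k * pochhammer (b - of_nat j) (Suc n - k)" for j
  have step: "g j - g (Suc j) = of_nat (Suc n - k) * P a b k j - of_nat k * P (a + 1) (b - 1) (k - 1) j"
    for j
  proof -
    have b_diff: "pochhammer (b - of_nat j) (Suc n - k) - pochhammer (b - 1 - of_nat j) (Suc n - k)
        = of_nat (Suc n - k) * pochhammer (b - of_nat j) (n - k)"
      using pochhammer_plus1_diff[of "b - 1 - of_nat j" "Suc n - k"] by (simp add: Suc_diff_le Suc.prems)
    have a_diff: "pochhammer (a + 1 + of_nat j) k - pochhammer (a + of_nat j) k
        = of_nat k * pochhammer (a + 1 + of_nat j) (k - 1)"
      using pochhammer_plus1_diff[of "a + of_nat j" k] by (simp add: add_ac)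
    have k_shift: "of_nat k * pochhammer c (Suc n - k) = of_nat k * pochhammer c (n - (k - 1))"
      for c :: 'a
      using Suc.prems by (cases k) auto
    have "g j - g (Suc j) =
          pochhammer (a + of_nat j) k
            * (pochhammer (b - of_nat j) (Suc n - k) - pochhammer (b - 1 - of_nat j) (Suc n - k))
        - pochhammer (b - 1 - of_nat j) (Suc n - k)
            * (pochhammer (a + 1 + of_nat j) k - pochhammer (a + of_nat j) k)"
      by (simp add: g_def algebra_simps)
    also have "\<dots> = of_nat (Suc n - k) * P a b k j
        - of_nat k * pochhammer (b - 1 - of_nat j) (Suc n - k) * pochhammer (a + 1 + of_nat j) (k - 1)"
      unfolding b_diff a_diff P_def by (simp add: mult_ac)
    also have "\<dots> = of_nat (Suc n - k) * P a b k j
        - of_nat k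
            * (pochhammer (a + 1 + of_nat j) (k - 1) * pochhammer (b - 1 - of_nat j) (n - (k - 1)))"
      unfolding k_shift by (simp add: mult_ac)
    finally show ?thesis
      by (simp add: P_def add_ac diff_diff_eq)
  qed
  have "(\<Sum>j\<le>Suc n. (-1)^j * of_nat (Suc n choose j) * g j)
      = of_nat (Suc n - k) * (\<Sum>j\<le>n. (-1)^j * of_nat (n choose j) * P a b k j)
        - of_nat k * (\<Sum>j\<le>n. (-1)^j * of_nat (n choose j) * P (a + 1) (b - 1) (k - 1) j)"
    by (simp only: alternating_binomial_sum_Suc step sum_distrib_left sum_subtractf[symmetric])
       (simp add: algebra_simps)
  also have "\<dots> = (-1)^k * of_nat (fact (Suc n))"
  proof (cases "k = Suc n")
    case True
    then show ?thesis
      using Suc.IH[of "k - 1" "a + 1" "b - 1"] by (simp add: P_def algebra_simps)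
  next
    case False
    with Suc.prems have "k \<le> n" by simp
    with Suc.IH[of k a b] Suc.IH[of "k - 1" "a + 1" "b - 1"] show ?thesis
      by (cases k) (simp_all add: P_def of_nat_diff algebra_simps)
  qed
  finally show ?case
    by (simp add: g_def)
qed

section \<open>Beta integrals against the Jacobi weight\<close>

definition jacobi_weight :: "real \<Rightarrow> real \<Rightarrow> real \<Rightarrow> real" where
  "jacobi_weight \<alpha> \<beta> t = (1 - t) powr \<alpha> * (1 + t) powr \<beta>"

lemma jacobi_weight_nonneg: "jacobi_weight \<alpha> \<beta> t \<ge> 0"
  by (simp add: jacobi_weight_def)

lemma has_integral_Beta_minus_one_one:
  fixes p q :: real
  assumes "p > -1" "q > -1"
  shows "((\<lambda>t. ((1 - t) / 2) powr p * ((1 + t) / 2) powr q) has_integral 2 * Beta (p + 1) (q + 1))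
           {-1<..<1}"
proof -
  have "((\<lambda>x. x powr q * (1 - x) powr p) has_integral Beta (q + 1) (p + 1)) (cbox 0 1)"
    using has_integral_Beta_real[of "q + 1" "p + 1"] assms by simp
  from has_integral_affinity'[OF this, of "1/2" "1/2"]
  have "((\<lambda>t. ((1 + t) / 2) powr q * ((1 - t) / 2) powr p) has_integral 2 * Beta (q + 1) (p + 1))
          {-1..1}"
    by (simp add: field_simps)
  then show ?thesis
    by (simp add: has_integral_Icc_iff_Ioo Beta_commute mult.commute)
qed

lemma has_integral_jacobi_weight_powers:
  fixes \<alpha> \<beta> :: real
  assumes "\<alpha> > -1" "\<beta> > -1"
  shows "((\<lambda>t. ((1 - t) / 2) ^ a * ((1 + t) / 2) ^ b * jacobi_weight \<alpha> \<beta> t) has_integral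
           2 powr (\<alpha> + \<beta> + 1) * Beta (\<alpha> + real a + 1) (\<beta> + real b + 1)) {-1<..<1}"
proof -
  have "((\<lambda>t. 2 powr (\<alpha> + \<beta>) * (((1 - t) / 2) powr (\<alpha> + real a) * ((1 + t) / 2) powr (\<beta> + real b)))
         has_integral 2 powr (\<alpha> + \<beta>) * (2 * Beta (\<alpha> + real a + 1) (\<beta> + real b + 1))) {-1<..<1}"
    using assms by (intro has_integral_mult_right has_integral_Beta_minus_one_one) auto
  moreover have "2 powr (\<alpha> + \<beta>) * (((1 - t) / 2) powr (\<alpha> + real a) * ((1 + t) / 2) powr (\<beta> + real b))
      = ((1 - t) / 2) ^ a * ((1 + t) / 2) ^ b * jacobi_weight \<alpha> \<beta> t" if "t \<in> {-1<..<1}" for t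
  proof -
    have ha: "((1 - t) / 2) powr (\<alpha> + real a) = ((1 - t) / 2) ^ a * ((1 - t) powr \<alpha> / 2 powr \<alpha>)"
      using that by (simp add: powr_add powr_realpow powr_divide power_divide mult_ac)
    have hb: "((1 + t) / 2) powr (\<beta> + real b) = ((1 + t) / 2) ^ b * ((1 + t) powr \<beta> / 2 powr \<beta>)"
      using that by (simp add: powr_add powr_realpow powr_divide power_divide mult_ac)
    show ?thesis
      unfolding ha hb by (simp add: jacobi_weight_def powr_add field_simps)
  qed
  ultimately show ?thesis
    by (subst has_integral_cong[symmetric]) (auto simp: powr_add mult_ac)
qed

definition jacobi_half_power_integral :: "real \<Rightarrow> real \<Rightarrow> nat \<Rightarrow> real" where
  "jacobi_half_power_integral \<alpha> \<beta> m =
     2 powr (\<alpha> + \<beta> + 1) * (Beta (\<alpha> + real m + 1) (\<beta> + 1) + Beta (\<alpha> + 1) (\<beta> + real m + 1))"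

lemma has_integral_jacobi_weight_half_powers:
  fixes \<alpha> \<beta> :: real
  assumes "\<alpha> > -1" "\<beta> > -1"
  shows "((\<lambda>t. (((1 - t) / 2) ^ m + ((1 + t) / 2) ^ m) * jacobi_weight \<alpha> \<beta> t) has_integral
           jacobi_half_power_integral \<alpha> \<beta> m) {-1<..<1}"
  using has_integral_add[OF has_integral_jacobi_weight_powers[OF assms, of m 0]
                            has_integral_jacobi_weight_powers[OF assms, of 0 m]]
  by (simp add: jacobi_half_power_integral_def distrib_left distrib_right)

lemma jacobi_half_power_integral_nonneg:
  assumes "\<alpha> > -1" "\<beta> > -1"
  shows "jacobi_half_power_integral \<alpha> \<beta> m \<ge> 0"
  using assms by (simp add: jacobi_half_power_integral_def Beta_def)

section \<open>The norm of the Jacobi polynomials\<close>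

definition jacobi_coeff :: "nat \<Rightarrow> real \<Rightarrow> real \<Rightarrow> nat \<Rightarrow> real" where
  "jacobi_coeff n \<alpha> \<beta> j = ((real n + \<alpha>) gchoose (n - j)) * ((real n + \<beta>) gchoose j)"

lemma sum_jacobi_coeff: "(\<Sum>j\<le>n. jacobi_coeff n \<alpha> \<beta> j) = (2 * real n + \<alpha> + \<beta>) gchoose n"
proof -
  have "(\<Sum>j\<le>n. jacobi_coeff n \<alpha> \<beta> j)
      = (\<Sum>j\<in>{0..n}. ((real n + \<beta>) gchoose j) * ((real n + \<alpha>) gchoose (n - j)))"
    by (simp add: jacobi_coeff_def atLeast0AtMost mult.commute)
  also have "\<dots> = ((real n + \<beta>) + (real n + \<alpha>)) gchoose n"
    by (rule gbinomial_Vandermonde)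
  finally show ?thesis
    by (simp add: algebra_simps)
qed

lemma jacobiP_eq_sum:
  "jacobiP n \<alpha> \<beta> t =
     (\<Sum>j\<le>n. (-1)^j * jacobi_coeff n \<alpha> \<beta> j * ((1 - t) / 2) ^ j * ((1 + t) / 2) ^ (n - j))"
  unfolding jacobiP_def
proof (rule sum.cong[OF refl])
  fix j assume "j \<in> {..n}"
  then have "(2::real) ^ n = 2 ^ j * 2 ^ (n - j)"
    by (simp add: power_add[symmetric])
  moreover have "(t - 1) ^ j = (-1) ^ j * (1 - t) ^ j"
    by (simp add: power_mult_distrib[symmetric])
  ultimately show "1 / 2 ^ n * ((real n + \<alpha>) gchoose (n - j)) * ((real n + \<beta>) gchoose j)
        * (t - 1) ^ j * (t + 1) ^ (n - j)
      = (-1)^j * jacobi_coeff n \<alpha> \<beta> j * ((1 - t) / 2) ^ j * ((1 + t) / 2) ^ (n - j)"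
    by (simp add: jacobi_coeff_def power_divide add.commute)
qed

lemma jacobiP_square_eq_sum:
  "(jacobiP n \<alpha> \<beta> t)\<^sup>2 =
     (\<Sum>k\<le>n. \<Sum>j\<le>n. (-1)^(j + k) * jacobi_coeff n \<alpha> \<beta> j * jacobi_coeff n \<alpha> \<beta> k
        * ((1 - t) / 2) ^ (j + k) * ((1 + t) / 2) ^ (n - j + (n - k)))"
  unfolding power2_eq_square jacobiP_eq_sum sum_product power_add
  by (simp add: mult_ac)

lemma pos_notin_nonpos_Ints: "(x::real) > 0 \<Longrightarrow> x \<notin> \<int>\<^sub>\<le>\<^sub>0"
  by auto

lemma jacobi_coeff_mult_Beta:
  fixes \<alpha> \<beta> :: real
  assumes "\<alpha> > -1" "\<beta> > -1" "j \<le> n" "k \<le> n"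
  shows "jacobi_coeff n \<alpha> \<beta> j * Beta (\<alpha> + real (j + k) + 1) (\<beta> + real (n - j + (n - k)) + 1)
       = Gamma (real n + \<alpha> + 1) * Gamma (real n + \<beta> + 1) / (Gamma (2 * real n + \<alpha> + \<beta> + 2) * fact n)
         * (real (n choose j)
             * (pochhammer (\<alpha> + 1 + real j) k * pochhammer (\<beta> + real n + 1 - real j) (n - k)))"
proof -
  have coeff: "jacobi_coeff n \<alpha> \<beta> j = Gamma (real n + \<alpha> + 1) / (fact (n - j) * Gamma (\<alpha> + real j + 1))
      * (Gamma (real n + \<beta> + 1) / (fact j * Gamma (\<beta> + real (n - j) + 1)))"
    unfolding jacobi_coeff_def using assms
    by (simp add: gbinomial_Gamma pos_notin_nonpos_Ints of_nat_diff algebra_simps)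
  have poch: "pochhammer (\<alpha> + 1 + real j) k = Gamma (\<alpha> + real j + real k + 1) / Gamma (\<alpha> + real j + 1)"
    "pochhammer (\<beta> + real n + 1 - real j) (n - k)
       = Gamma (\<beta> + real (n - j) + real (n - k) + 1) / Gamma (\<beta> + real (n - j) + 1)"
    using assms pochhammer_Gamma[OF pos_notin_nonpos_Ints[of "\<alpha> + 1 + real j"], of k]
      pochhammer_Gamma[OF pos_notin_nonpos_Ints[of "\<beta> + real (n - j) + 1"], of "n - k"]
    by (simp_all add: of_nat_diff algebra_simps)
  have beta: "Beta (\<alpha> + real (j + k) + 1) (\<beta> + real (n - j + (n - k)) + 1)
      = Gamma (\<alpha> + real j + real k + 1) * Gamma (\<beta> + real (n - j) + real (n - k) + 1)
        / Gamma (2 * real n + \<alpha> + \<beta> + 2)"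
    unfolding Beta_def using assms by (simp add: of_nat_diff algebra_simps)
  have "Gamma (\<alpha> + real j + 1) \<noteq> 0" "Gamma (\<beta> + real (n - j) + 1) \<noteq> 0"
    "Gamma (2 * real n + \<alpha> + \<beta> + 2) \<noteq> 0"
    using assms Gamma_real_pos by (auto simp: less_imp_neq[symmetric])
  then show ?thesis
    unfolding coeff poch beta binomial_fact[OF assms(3)] by (simp add: field_simps)
qed

lemma sum_jacobi_coeff_mult_Beta:
  fixes \<alpha> \<beta> :: real
  assumes "\<alpha> > -1" "\<beta> > -1" "k \<le> n"
  shows "(\<Sum>j\<le>n. (-1)^j * jacobi_coeff n \<alpha> \<beta> j
            * Beta (\<alpha> + real (j + k) + 1) (\<beta> + real (n - j + (n - k)) + 1))
       = (-1)^k * (Gamma (real n + \<alpha> + 1) * Gamma (real n + \<beta> + 1) / Gamma (2 * real n + \<alpha> + \<beta> + 2))"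
proof -
  define G where "G = Gamma (real n + \<alpha> + 1) * Gamma (real n + \<beta> + 1) / Gamma (2 * real n + \<alpha> + \<beta> + 2)"
  have "(\<Sum>j\<le>n. (-1)^j * jacobi_coeff n \<alpha> \<beta> j
            * Beta (\<alpha> + real (j + k) + 1) (\<beta> + real (n - j + (n - k)) + 1))
      = G / fact n * (\<Sum>j\<le>n. (-1)^j * real (n choose j)
            * (pochhammer (\<alpha> + 1 + real j) k * pochhammer (\<beta> + real n + 1 - real j) (n - k)))"
    unfolding sum_distrib_left G_def
  proof (intro sum.cong refl)
    fix j assume "j \<in> {..n}"
    then show "(-1)^j * jacobi_coeff n \<alpha> \<beta> j
        * Beta (\<alpha> + real (j + k) + 1) (\<beta> + real (n - j + (n - k)) + 1)
      = Gamma (real n + \<alpha> + 1) * Gamma (real n + \<beta> + 1) / Gamma (2 * real n + \<alpha> + \<beta> + 2) / fact n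
        * ((-1)^j * real (n choose j)
            * (pochhammer (\<alpha> + 1 + real j) k * pochhammer (\<beta> + real n + 1 - real j) (n - k)))"
      using jacobi_coeff_mult_Beta[OF assms(1,2) _ assms(3), of j] by (simp add: mult_ac)
  qed
  also have "\<dots> = (-1)^k * G"
    using alternating_binomial_sum_pochhammer_product[OF assms(3), of "\<alpha> + 1" "\<beta> + real n + 1"]
    by simp
  finally show ?thesis
    unfolding G_def .
qed

definition jacobiP_sqnorm :: "nat \<Rightarrow> real \<Rightarrow> real \<Rightarrow> real" where
  "jacobiP_sqnorm n \<alpha> \<beta> = 2 powr (\<alpha> + \<beta> + 1)
     * (Gamma (real n + \<alpha> + 1) * Gamma (real n + \<beta> + 1) / Gamma (2 * real n + \<alpha> + \<beta> + 2))
     * ((2 * real n + \<alpha> + \<beta>) gchoose n)"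

lemma has_integral_jacobi_weight_jacobiP_square:
  fixes \<alpha> \<beta> :: real
  assumes "\<alpha> > -1" "\<beta> > -1"
  shows "((\<lambda>t. jacobi_weight \<alpha> \<beta> t * (jacobiP n \<alpha> \<beta> t)\<^sup>2) has_integral jacobiP_sqnorm n \<alpha> \<beta>)
           {-1<..<1}"
proof -
  define A where "A = jacobi_coeff n \<alpha> \<beta>"
  define G where "G = Gamma (real n + \<alpha> + 1) * Gamma (real n + \<beta> + 1) / Gamma (2 * real n + \<alpha> + \<beta> + 2)"
  have "((\<lambda>t. \<Sum>k\<le>n. \<Sum>j\<le>n. (-1)^(j + k) * A j * A k
            * (((1 - t) / 2) ^ (j + k) * ((1 + t) / 2) ^ (n - j + (n - k)) * jacobi_weight \<alpha> \<beta> t))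
        has_integral (\<Sum>k\<le>n. \<Sum>j\<le>n. (-1)^(j + k) * A j * A k
            * (2 powr (\<alpha> + \<beta> + 1) * Beta (\<alpha> + real (j + k) + 1) (\<beta> + real (n - j + (n - k)) + 1))))
        {-1<..<1}"
    using assms
    by (intro has_integral_sum finite_atMost has_integral_mult_right has_integral_jacobi_weight_powers)
  moreover have "(\<Sum>k\<le>n. \<Sum>j\<le>n. (-1)^(j + k) * A j * A k
            * (2 powr (\<alpha> + \<beta> + 1) * Beta (\<alpha> + real (j + k) + 1) (\<beta> + real (n - j + (n - k)) + 1)))
      = (\<Sum>k\<le>n. 2 powr (\<alpha> + \<beta> + 1) * ((-1)^k * A k) * (\<Sum>j\<le>n. (-1)^j * A j
            * Beta (\<alpha> + real (j + k) + 1) (\<beta> + real (n - j + (n - k)) + 1)))"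
    by (simp add: sum_distrib_left power_add mult_ac)
  also have "\<dots> = (\<Sum>k\<le>n. 2 powr (\<alpha> + \<beta> + 1) * G * A k)"
  proof (intro sum.cong refl)
    fix k assume "k \<in> {..n}"
    then show "2 powr (\<alpha> + \<beta> + 1) * ((-1)^k * A k) * (\<Sum>j\<le>n. (-1)^j * A j
            * Beta (\<alpha> + real (j + k) + 1) (\<beta> + real (n - j + (n - k)) + 1))
        = 2 powr (\<alpha> + \<beta> + 1) * G * A k"
      using sum_jacobi_coeff_mult_Beta[OF assms, of k n] by (simp add: A_def G_def)
  qed
  also have "\<dots> = 2 powr (\<alpha> + \<beta> + 1) * G * ((2 * real n + \<alpha> + \<beta>) gchoose n)"
    by (simp add: A_def sum_jacobi_coeff sum_distrib_left[symmetric])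
  moreover have "(\<Sum>k\<le>n. \<Sum>j\<le>n. (-1)^(j + k) * A j * A k
            * (((1 - t) / 2) ^ (j + k) * ((1 + t) / 2) ^ (n - j + (n - k)) * jacobi_weight \<alpha> \<beta> t))
      = jacobi_weight \<alpha> \<beta> t * (jacobiP n \<alpha> \<beta> t)\<^sup>2" for t
    by (simp add: jacobiP_square_eq_sum A_def sum_distrib_left mult_ac)
  ultimately show ?thesis
    by (simp add: jacobiP_sqnorm_def G_def)
qed

definition jacobi_normalizer :: "nat \<Rightarrow> real \<Rightarrow> real \<Rightarrow> real" where
  "jacobi_normalizer n \<alpha> \<beta> =
     ((2 * real n + \<alpha> + \<beta> + 1) * Gamma (real n + \<alpha> + \<beta> + 1) * fact n)
       / (2 powr (\<alpha> + \<beta> + 1) * Gamma (real n + \<alpha> + 1) * Gamma (real n + \<beta> + 1))"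

lemma jacobi_fun_eq:
  "jacobi_fun n \<alpha> \<beta> t = jacobi_normalizer n \<alpha> \<beta> * jacobi_weight \<alpha> \<beta> t * jacobiP n \<alpha> \<beta> t"
  by (simp add: jacobi_fun_def jacobi_normalizer_def jacobi_weight_def mult.assoc)

lemma jacobi_normalizer_pos:
  assumes "\<alpha> > -1" "\<beta> > -1" "n \<ge> 1"
  shows "jacobi_normalizer n \<alpha> \<beta> > 0"
  unfolding jacobi_normalizer_def using assms
  by (intro divide_pos_pos mult_pos_pos Gamma_real_pos) auto

lemma jacobi_normalizer_eq_inverse:
  fixes \<alpha> \<beta> :: real
  assumes "\<alpha> > -1" "\<beta> > -1" "n \<ge> 1"
  shows "jacobi_normalizer n \<alpha> \<beta> = inverse (jacobiP_sqnorm n \<alpha> \<beta>)"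
proof -
  define s where "s = 2 * real n + \<alpha> + \<beta> + 1"
  have s: "s > 0"
    using assms by (simp add: s_def)
  have gchoose: "(2 * real n + \<alpha> + \<beta>) gchoose n = Gamma s / (fact n * Gamma (real n + \<alpha> + \<beta> + 1))"
    using assms s by (simp add: gbinomial_Gamma pos_notin_nonpos_Ints s_def algebra_simps)
  have Gamma_s: "Gamma (2 * real n + \<alpha> + \<beta> + 2) = s * Gamma s"
    using Gamma_plus1[OF pos_notin_nonpos_Ints[OF s]] by (simp add: s_def algebra_simps)
  have "Gamma s \<noteq> 0" "Gamma (real n + \<alpha> + \<beta> + 1) \<noteq> 0"
    "Gamma (real n + \<alpha> + 1) \<noteq> 0" "Gamma (real n + \<beta> + 1) \<noteq> 0"
    using assms s Gamma_real_pos by (auto simp: less_imp_neq[symmetric])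
  with s show ?thesis
    unfolding jacobiP_sqnorm_def gchoose Gamma_s jacobi_normalizer_def s_def[symmetric]
    by (simp add: field_simps)
qed

section \<open>The Cauchy-Schwarz estimate\<close>

lemma ennreal_le_sqrt_if_power2_le:
  fixes x :: ennreal
  assumes "x\<^sup>2 \<le> ennreal y" "y \<ge> 0"
  shows "x \<le> ennreal (sqrt y)"
proof (cases x)
  case (real r)
  with assms have "r\<^sup>2 \<le> y"
    by (simp add: ennreal_power)
  with real show ?thesis
    by (simp add: ennreal_leI real_le_rsqrt)
next
  case top
  with assms show ?thesis
    by (simp add: power2_eq_square top_unique)
qed

lemma set_integral_mult_le_sqrt:
  fixes u v U V :: "real \<Rightarrow> real"
  assumes [measurable]: "S \<in> sets lborel" "u \<in> borel_measurable lborel" "v \<in> borel_measurable lborel"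
    and nonneg: "\<And>x. x \<in> S \<Longrightarrow> 0 \<le> u x" "\<And>x. x \<in> S \<Longrightarrow> 0 \<le> v x"
    and le: "\<And>x. x \<in> S \<Longrightarrow> (u x)\<^sup>2 \<le> U x" "\<And>x. x \<in> S \<Longrightarrow> (v x)\<^sup>2 \<le> V x"
    and int: "(U has_integral A) S" "(V has_integral B) S"
  shows "(LINT x:S|lborel. u x * v x) \<le> sqrt (A * B)"
proof -
  define f where "f x = ennreal (u x) * indicator S x" for x
  define g where "g x = ennreal (v x) * indicator S x" for x
  have U0: "\<And>x. x \<in> S \<Longrightarrow> 0 \<le> U x" and V0: "\<And>x. x \<in> S \<Longrightarrow> 0 \<le> V x"
    using le by (meson order_trans zero_le_power2)+
  have A0: "A \<ge> 0" and B0: "B \<ge> 0"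
    using has_integral_nonneg[OF int(1) U0] has_integral_nonneg[OF int(2) V0] by auto
  have sq_le: "(\<integral>\<^sup>+x. (ennreal (h x) * indicator S x) ^ 2 \<partial>lborel) \<le> ennreal C"
    if "\<And>x. x \<in> S \<Longrightarrow> 0 \<le> h x" "\<And>x. x \<in> S \<Longrightarrow> (h x)\<^sup>2 \<le> H x" "(H has_integral C) S"
    for h H :: "real \<Rightarrow> real" and C
  proof -
    have "(\<integral>\<^sup>+x. (ennreal (h x) * indicator S x) ^ 2 \<partial>lborel)
        \<le> (\<integral>\<^sup>+x. ennreal (H x) * indicator S x \<partial>lborel)"
      using that(1,2)
      by (intro nn_integral_mono) (auto simp: indicator_def ennreal_power intro: ennreal_leI)
    also have "\<dots> = ennreal C"
      using that order_trans[OF zero_le_power2 that(2)] by (intro nn_integral_has_integral_lebesgue')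
    finally show ?thesis .
  qed
  have "(\<integral>\<^sup>+x. f x * g x \<partial>lborel)\<^sup>2 \<le> (\<integral>\<^sup>+x. f x ^ 2 \<partial>lborel) * (\<integral>\<^sup>+x. g x ^ 2 \<partial>lborel)"
    unfolding f_def g_def by (rule Cauchy_Schwarz_nn_integral) measurable
  also have "\<dots> \<le> ennreal A * ennreal B"
    unfolding f_def g_def using sq_le[OF nonneg(1) le(1) int(1)] sq_le[OF nonneg(2) le(2) int(2)]
    by (intro mult_mono) auto
  also have "\<dots> = ennreal (A * B)"
    using A0 B0 by (simp add: ennreal_mult)
  finally have "(\<integral>\<^sup>+x. f x * g x \<partial>lborel) \<le> ennreal (sqrt (A * B))"
    by (rule ennreal_le_sqrt_if_power2_le) (use A0 B0 in simp)
  moreover have "(LINT x:S|lborel. u x * v x) = enn2real (\<integral>\<^sup>+x. f x * g x \<partial>lborel)"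
    unfolding set_lebesgue_integral_def f_def g_def
    by (subst integral_eq_nn_integral)
       (auto simp: indicator_def nonneg ennreal_mult
             intro!: arg_cong[where f = enn2real] nn_integral_cong)
  ultimately show ?thesis
    using A0 B0 by (simp add: enn2real_leI)
qed

lemma abs_power_le_half_powers:
  fixes t :: real
  assumes "\<bar>t\<bar> \<le> 1"
  shows "\<bar>t\<bar> ^ m \<le> ((1 - t) / 2) ^ m + ((1 + t) / 2) ^ m"
proof -
  have "0 \<le> (1 - t) / 2" "0 \<le> (1 + t) / 2"
    using assms by auto
  moreover have "\<bar>t\<bar> \<le> (1 - t) / 2 \<or> \<bar>t\<bar> \<le> (1 + t) / 2"
    using assms by (cases "t \<ge> 0") auto
  ultimately show ?thesis
    by (metis abs_ge_zero add.commute add_increasing power_mono zero_le_power)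
qed

lemma borel_measurable_jacobiP [measurable]: "jacobiP n \<alpha> \<beta> \<in> borel_measurable borel"
  unfolding jacobiP_def by measurable

lemma jacobi_fun_moment_le:
  fixes \<alpha> \<beta> :: real
  assumes "\<alpha> > -1" "\<beta> > -1" "n \<ge> 1"
  shows "(LINT t:{-1<..<1}|lborel. \<bar>t\<bar> ^ i * \<bar>jacobi_fun n \<alpha> \<beta> t\<bar>)
     \<le> sqrt (jacobi_half_power_integral \<alpha> \<beta> (2 * i) * jacobi_normalizer n \<alpha> \<beta>)"
proof -
  define N where "N = jacobi_normalizer n \<alpha> \<beta>"
  define W where "W = jacobi_weight \<alpha> \<beta>"
  define P where "P = jacobiP n \<alpha> \<beta>"
  have N: "N > 0"
    using jacobi_normalizer_pos[OF assms] by (simp add: N_def)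
  have W: "W t \<ge> 0" for t
    by (simp add: W_def jacobi_weight_nonneg)
  have "(LINT t:{-1<..<1}|lborel. \<bar>t\<bar> ^ i * \<bar>jacobi_fun n \<alpha> \<beta> t\<bar>)
      = (LINT t:{-1<..<1}|lborel. (\<bar>t\<bar> ^ i * sqrt (W t)) * (N * sqrt (W t) * \<bar>P t\<bar>))"
    using N W by (intro set_lebesgue_integral_cong)
      (auto simp: jacobi_fun_eq N_def W_def P_def abs_mult mult_ac)
  also have "\<dots> \<le> sqrt (jacobi_half_power_integral \<alpha> \<beta> (2 * i) * (N\<^sup>2 * inverse N))"
  proof (rule set_integral_mult_le_sqrt)
    show "(\<lambda>t. \<bar>t\<bar> ^ i * sqrt (W t)) \<in> borel_measurable lborel"
      "(\<lambda>t. N * sqrt (W t) * \<bar>P t\<bar>) \<in> borel_measurable lborel"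
      by (simp_all add: W_def P_def jacobi_weight_def)
    show "(\<bar>t\<bar> ^ i * sqrt (W t))\<^sup>2 \<le> (((1 - t) / 2) ^ (2 * i) + ((1 + t) / 2) ^ (2 * i)) * W t"
      if "t \<in> {-1<..<1}" for t
    proof -
      have "(\<bar>t\<bar> ^ i * sqrt (W t))\<^sup>2 = \<bar>t\<bar> ^ (2 * i) * W t"
        using W[of t] by (simp add: power_mult_distrib power_mult[symmetric] mult.commute[of i 2])
      with that W[of t] abs_power_le_half_powers[of t "2 * i"] show ?thesis
        by (auto intro: mult_right_mono)
    qed
    show "((\<lambda>t. (((1 - t) / 2) ^ (2 * i) + ((1 + t) / 2) ^ (2 * i)) * W t) has_integral
        jacobi_half_power_integral \<alpha> \<beta> (2 * i)) {-1<..<1}"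
      unfolding W_def by (rule has_integral_jacobi_weight_half_powers[OF assms(1,2)])
    show "((\<lambda>t. N\<^sup>2 * (W t * (P t)\<^sup>2)) has_integral N\<^sup>2 * inverse N) {-1<..<1}"
      using has_integral_jacobi_weight_jacobiP_square[OF assms(1,2), of n]
      unfolding N_def W_def P_def jacobi_normalizer_eq_inverse[OF assms]
      by (intro has_integral_mult_right) simp
  qed (use N W in \<open>auto simp: power_mult_distrib\<close>)
  also have "N\<^sup>2 * inverse N = N"
    using N by (simp add: power2_eq_square field_simps)
  finally show ?thesis
    by (simp add: N_def)
qed

section \<open>Growth of the constants\<close>

lemma Gamma_shift_ratio_LIMSEQ:
  fixes a b :: real
  assumes "a > 0" "b > 0"
  shows "(\<lambda>m. real m powr (b - a) * Gamma (real m + a) / Gamma (real m + b)) \<longlonglongrightarrow> 1"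
proof -
  have Gamma_series: "(\<lambda>m. Gamma (real m + z) / (fact (m - 1) * real m powr z)) \<longlonglongrightarrow> 1"
    if "z > 0" for z :: real
  proof -
    have "(\<lambda>m. Gamma z / Gamma_series' z m) \<longlonglongrightarrow> Gamma z / Gamma z"
      using Gamma_real_pos[OF that] by (intro tendsto_intros Gamma_series'_LIMSEQ) auto
    moreover have "\<forall>\<^sub>F m in sequentially. Gamma z / Gamma_series' z m
        = Gamma (real m + z) / (fact (m - 1) * real m powr z)"
      using eventually_gt_at_top[of "0::nat"]
    proof eventually_elim
      case (elim m)
      have "pochhammer z m = Gamma (z + real m) / Gamma z"
        using that by (simp add: pochhammer_Gamma pos_notin_nonpos_Ints)
      with elim Gamma_real_pos[OF that] show ?case
        by (simp add: Gamma_series'_def powr_def field_simps)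
    qed
    ultimately show ?thesis
      using Gamma_real_pos[OF that] by (simp add: Lim_transform_eventually)
  qed
  have "(\<lambda>m. (Gamma (real m + a) / (fact (m - 1) * real m powr a))
           / (Gamma (real m + b) / (fact (m - 1) * real m powr b))) \<longlonglongrightarrow> 1 / 1"
    using assms by (intro tendsto_divide Gamma_series) auto
  moreover have "\<forall>\<^sub>F m in sequentially. (Gamma (real m + a) / (fact (m - 1) * real m powr a))
           / (Gamma (real m + b) / (fact (m - 1) * real m powr b))
      = real m powr (b - a) * Gamma (real m + a) / Gamma (real m + b)"
    using eventually_gt_at_top[of "0::nat"]
  proof eventually_elim
    case (elim m)
    have "Gamma (real m + b) > 0"
      using assms by simp
    with elim show ?case
      by (simp add: powr_diff field_simps)
  qed
  ultimately show ?thesis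
    by (simp add: Lim_transform_eventually)
qed

lemma convergent_bounded_above:
  fixes f :: "nat \<Rightarrow> real"
  assumes "convergent f"
  obtains B where "B \<ge> 0" "\<And>m. f m \<le> B"
proof -
  obtain B where "B > 0" "\<And>m. norm (f m) \<le> B"
    using convergent_imp_Bseq[OF assms] by (rule BseqE) blast
  with that show thesis
    by (metis abs_le_D1 less_imp_le real_norm_def)
qed

lemma Beta_le_powr:
  fixes p q :: real
  assumes "p > 0" "q > 0"
  shows "\<exists>c \<ge> 0. \<forall>m > 0. Beta p (q + real m) \<le> c * real m powr - p"
proof -
  have "convergent (\<lambda>m. real m powr p * Gamma (real m + q) / Gamma (real m + (q + p)))"
    using Gamma_shift_ratio_LIMSEQ[of q "q + p"] assms by (auto simp: convergent_def)
  then obtain B where "B \<ge> 0"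
    and B: "\<And>m. real m powr p * Gamma (real m + q) / Gamma (real m + (q + p)) \<le> B"
    by (meson convergent_bounded_above)
  have "Beta p (q + real m) \<le> Gamma p * B * real m powr - p" if "m > 0" for m
  proof -
    have "Beta p (q + real m) = Gamma p * (real m powr p * Gamma (real m + q) / Gamma (real m + (q + p)))
                                  * real m powr - p"
      using that by (simp add: Beta_def powr_minus field_simps)
    also have "\<dots> \<le> Gamma p * B * real m powr - p"
      using assms B[of m] by (intro mult_right_mono mult_left_mono) auto
    finally show ?thesis .
  qed
  with \<open>B \<ge> 0\<close> assms show ?thesis
    by (intro exI[of _ "Gamma p * B"]) auto
qed

lemma jacobi_normalizer_le:
  fixes \<alpha> \<beta> :: real
  assumes "\<alpha> > -1" "\<beta> > -1"
  shows "\<exists>c. \<forall>n \<ge> 1. jacobi_normalizer n \<alpha> \<beta> \<le> c * real n"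
proof -
  \<comment> \<open>f (n - 1) is the Gamma quotient in jacobi_normalizer n; the shift keeps every Gamma
      argument positive, also when \<alpha> + \<beta> \<le> -1.\<close>
  define f where "f m = Gamma (real m + (\<alpha> + \<beta> + 2)) * Gamma (real m + 2)
                         / (Gamma (real m + (\<alpha> + 2)) * Gamma (real m + (\<beta> + 2)))" for m :: nat
  have "(\<lambda>m. (real m powr ((\<alpha> + 2) - (\<alpha> + \<beta> + 2)) * Gamma (real m + (\<alpha> + \<beta> + 2))
                  / Gamma (real m + (\<alpha> + 2)))
          * (real m powr ((\<beta> + 2) - 2) * Gamma (real m + 2) / Gamma (real m + (\<beta> + 2)))) \<longlonglongrightarrow> 1 * 1"
    using assms by (intro tendsto_mult Gamma_shift_ratio_LIMSEQ) auto
  moreover have "\<forall>\<^sub>F m in sequentially.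
      (real m powr ((\<alpha> + 2) - (\<alpha> + \<beta> + 2)) * Gamma (real m + (\<alpha> + \<beta> + 2))
          / Gamma (real m + (\<alpha> + 2)))
        * (real m powr ((\<beta> + 2) - 2) * Gamma (real m + 2) / Gamma (real m + (\<beta> + 2))) = f m"
    using eventually_gt_at_top[of "0::nat"]
  proof eventually_elim
    case (elim m)
    then have "real m powr ((\<alpha> + 2) - (\<alpha> + \<beta> + 2)) * real m powr ((\<beta> + 2) - 2) = 1"
      by (simp add: powr_add[symmetric])
    then show ?case
      unfolding f_def by (simp add: field_simps)
  qed
  ultimately have "convergent f"
    by (auto simp: convergent_def intro: Lim_transform_eventually)
  then obtain B where "B \<ge> 0" "\<And>m. f m \<le> B"
    by (meson convergent_bounded_above)
  have "jacobi_normalizer n \<alpha> \<beta> \<le> (3 + \<bar>\<alpha>\<bar> + \<bar>\<beta>\<bar>) * B / 2 powr (\<alpha> + \<beta> + 1) * real n"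
    if "n \<ge> 1" for n
  proof -
    have "\<bar>\<alpha>\<bar> \<le> \<bar>\<alpha>\<bar> * real n" "\<bar>\<beta>\<bar> \<le> \<bar>\<beta>\<bar> * real n"
      using that by (simp_all add: mult_le_cancel_left1)
    then have lin: "2 * real n + \<alpha> + \<beta> + 1 \<le> (3 + \<bar>\<alpha>\<bar> + \<bar>\<beta>\<bar>) * real n"
      using that by (simp add: algebra_simps)
    have "fact n = Gamma (real (n - 1) + 2)"
      using that Gamma_fact[of n, where 'a = real] by (simp add: of_nat_diff add_ac)
    then have "jacobi_normalizer n \<alpha> \<beta> = (2 * real n + \<alpha> + \<beta> + 1) * f (n - 1) / 2 powr (\<alpha> + \<beta> + 1)"
      using that by (simp add: jacobi_normalizer_def f_def of_nat_diff algebra_simps)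
    also have "\<dots> \<le> ((3 + \<bar>\<alpha>\<bar> + \<bar>\<beta>\<bar>) * real n) * B / 2 powr (\<alpha> + \<beta> + 1)"
      using that assms lin \<open>B \<ge> 0\<close> \<open>f (n - 1) \<le> B\<close>
      by (intro divide_right_mono mult_mono) (auto simp: f_def intro!: divide_nonneg_nonneg)
    finally show ?thesis
      by (simp add: mult_ac)
  qed
  then show ?thesis
    by blast
qed

lemma jacobi_half_power_integral_le:
  fixes \<alpha> \<beta> :: real
  assumes "\<alpha> > -1" "\<beta> > -1"
  shows "\<exists>c. \<forall>i \<ge> 1. jacobi_half_power_integral \<alpha> \<beta> (2 * i) \<le> c * real i powr - (1 + min \<alpha> \<beta>)"
proof -
  obtain c1 where c1: "c1 \<ge> 0" "\<And>m. m > 0 \<Longrightarrow> Beta (\<beta> + 1) (\<alpha> + 1 + real m) \<le> c1 * real m powr - (\<beta> + 1)"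
    using Beta_le_powr[of "\<beta> + 1" "\<alpha> + 1"] assms by auto
  obtain c2 where c2: "c2 \<ge> 0" "\<And>m. m > 0 \<Longrightarrow> Beta (\<alpha> + 1) (\<beta> + 1 + real m) \<le> c2 * real m powr - (\<alpha> + 1)"
    using Beta_le_powr[of "\<alpha> + 1" "\<beta> + 1"] assms by auto
  have decay: "real (2 * i) powr - (p + 1) \<le> real i powr - (1 + min \<alpha> \<beta>)"
    if "i \<ge> 1" "p \<ge> min \<alpha> \<beta>" for i p
  proof -
    have "real (2 * i) powr - (p + 1) \<le> real i powr - (p + 1)"
      using that assms by (intro powr_mono2') auto
    also have "\<dots> \<le> real i powr - (1 + min \<alpha> \<beta>)"
      using that by (intro powr_mono) auto
    finally show ?thesis .
  qed
  have "jacobi_half_power_integral \<alpha> \<beta> (2 * i)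
      \<le> 2 powr (\<alpha> + \<beta> + 1) * (c1 + c2) * real i powr - (1 + min \<alpha> \<beta>)" if "i \<ge> 1" for i
  proof -
    have "Beta (\<alpha> + real (2 * i) + 1) (\<beta> + 1) \<le> c1 * real i powr - (1 + min \<alpha> \<beta>)"
      using c1(2)[of "2 * i"] decay[OF that, of \<beta>] mult_left_mono[OF _ c1(1)] that
      by (fastforce simp: Beta_commute add_ac)
    moreover have "Beta (\<alpha> + 1) (\<beta> + real (2 * i) + 1) \<le> c2 * real i powr - (1 + min \<alpha> \<beta>)"
      using c2(2)[of "2 * i"] decay[OF that, of \<alpha>] mult_left_mono[OF _ c2(1)] that
      by (fastforce simp: add_ac)
    ultimately have "Beta (\<alpha> + real (2 * i) + 1) (\<beta> + 1) + Beta (\<alpha> + 1) (\<beta> + real (2 * i) + 1)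
        \<le> (c1 + c2) * real i powr - (1 + min \<alpha> \<beta>)"
      by (simp add: distrib_right)
    from mult_left_mono[OF this, of "2 powr (\<alpha> + \<beta> + 1)"] show ?thesis
      by (simp add: jacobi_half_power_integral_def mult.assoc)
  qed
  then show ?thesis
    by blast
qed

theorem proposition4p2:
  fixes \<alpha> \<beta> :: real
  assumes "\<alpha> > -1" and "\<beta> > -1"
  shows "\<exists>C. \<forall>n i :: nat. n \<ge> 1 \<longrightarrow> i \<ge> 1 \<longrightarrow>
           (LINT t:{-1<..<1}|lborel. \<bar>t\<bar> ^ i * \<bar>jacobi_fun n \<alpha> \<beta> t\<bar>)
             \<le> C * sqrt (real n / real i powr (1 + min \<alpha> \<beta>))"
proof -
  obtain cN where cN: "\<And>n. n \<ge> 1 \<Longrightarrow> jacobi_normalizer n \<alpha> \<beta> \<le> cN * real n"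
    using jacobi_normalizer_le[OF assms] by blast
  obtain cM where cM: "\<And>i. i \<ge> 1 \<Longrightarrow>
      jacobi_half_power_integral \<alpha> \<beta> (2 * i) \<le> cM * real i powr - (1 + min \<alpha> \<beta>)"
    using jacobi_half_power_integral_le[OF assms] by blast
  have "(LINT t:{-1<..<1}|lborel. \<bar>t\<bar> ^ i * \<bar>jacobi_fun n \<alpha> \<beta> t\<bar>)
          \<le> sqrt (cM * cN) * sqrt (real n / real i powr (1 + min \<alpha> \<beta>))"
    if "n \<ge> 1" "i \<ge> 1" for n i
  proof -
    have "jacobi_half_power_integral \<alpha> \<beta> (2 * i) * jacobi_normalizer n \<alpha> \<beta>
        \<le> (cM * real i powr - (1 + min \<alpha> \<beta>)) * (cN * real n)"
      using cM[OF that(2)] jacobi_half_power_integral_nonneg[OF assms, of "2 * i"]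
        jacobi_normalizer_pos[OF assms that(1)]
      by (intro mult_mono[OF cM[OF that(2)] cN[OF that(1)]]) auto
    also have "\<dots> = cM * cN * (real n / real i powr (1 + min \<alpha> \<beta>))"
      by (simp add: powr_minus[of _ "1 + min \<alpha> \<beta>", symmetric] divide_inverse)
    finally have "sqrt (jacobi_half_power_integral \<alpha> \<beta> (2 * i) * jacobi_normalizer n \<alpha> \<beta>)
        \<le> sqrt (cM * cN) * sqrt (real n / real i powr (1 + min \<alpha> \<beta>))"
      by (simp add: real_sqrt_mult[symmetric])
    with jacobi_fun_moment_le[OF assms that(1), of i] show ?thesis
      by (rule order_trans)
  qed
  then show ?thesis
    by blast
qed

end
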